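(* Let $\gamma>0$. The set $\mathcal{G}_\gamma$ has two path-connected components, namely $\mathcal{G}_\gamma^+=\{(X,Y,\hat A,\hat B,\hat C,\hat D,\Pi,\Xi)\in\mathcal{G}_\gamma:\det\Pi>0\}$ and $\mathcal{G}_\gamma^-=\{(X,Y,\hat A,\hat B,\hat C,\hat D,\Pi,\Xi)\in\mathcal{G}_\gamma:\det\Pi<0\}$.
   Context: Consider real matrices $A\in\mathbb{R}^{n_x\times n_x}$, $B_1\in\mathbb{R}^{n_x\times n_w}$, $B_2\in\mathbb{R}^{n_x\times n_u}$, $C_1\in\mathbb{R}^{n_z\times n_x}$, $C_2\in\mathbb{R}^{n_y\times n_x}$, $D_{11}\in\mathbb{R}^{n_z\times n_w}$, $D_{12}\in\mathbb{R}^{n_z\times n_u}$, $D_{21}\in\mathbb{R}^{n_y\times n_w}$ (the data of the plant $\dot x=Ax+B_1w+B_2u$, $z=C_1x+D_{11}w+D_{12}u$, $y=C_2x+D_{21}w$), with $(A,B_2)$ stabilizable and $(C_2,A)$ detectable. For $X,Y\in\mathbb{S}^{n_x}$, $\hat A\in\mathbb{R}^{n_x\times n_x}$, $\hat B\in\mathbb{R}^{n_x\times n_y}$, $\hat C\in\mathbb{R}^{n_u\times n_x}$, $\hat D\in\mathbb{R}^{n_u\times n_y}$, let $M_\gamma$ be the symmetric $4\times4$ block matrix with $M_{11}=AX+XA^T+B_2\hat C+(B_2\hat C)^T$, $M_{12}=\hat A^T+A+B_2\hat DC_2$, $M_{13}=B_1+B_2\hat DD_{21}$, $M_{14}=(C_1X+D_{12}\hat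 C)^T$, $M_{22}=A^TY+YA+\hat BC_2+(\hat BC_2)^T$, $M_{23}=YB_1+\hat BD_{21}$, $M_{24}=(C_1+D_{12}\hat DC_2)^T$, $M_{33}=-\gamma I$, $M_{34}=(D_{11}+D_{12}\hat DD_{21})^T$, $M_{44}=-\gamma I$. $\mathcal{F}_\gamma$ is the set of $(X,Y,\hat A,\hat B,\hat C,\hat D)$ with $\begin{bmatrix}X& I\\ I& Y\end{bmatrix}\succ0$ and $M_\gamma\prec0$; $\mathcal{G}_\gamma$ is the set of $(X,Y,\hat A,\hat B,\hat C,\hat D,\Pi,\Xi)$ with $(X,\dots,\hat D)\in\mathcal{F}_\gamma$, $\Pi,\Xi\in\mathbb{R}^{n_x\times n_x}$ and $\Xi\Pi=I-YX$. *)

theory Defs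
  imports "HOL-Analysis.Analysis"
begin

text \<open>Matrices: real^'c^'r is an r-by-c real matrix (rows indexed by 'r).
  Dimensions: 'x = n_x, 'w = n_w, 'u = n_u, 'z = n_z, 'y = n_y.\<close>

definition symmetric_mat :: "real^'n^'n \<Rightarrow> bool" where
  "symmetric_mat M \<longleftrightarrow> transpose M = M"

definition pos_def :: "real^'n^'n \<Rightarrow> bool" where
  "pos_def M \<longleftrightarrow> symmetric_mat M \<and> (\<forall>v. v \<noteq> 0 \<longrightarrow> v \<bullet> (M *v v) > 0)"

definition neg_def :: "real^'n^'n \<Rightarrow> bool" where
  "neg_def M \<longleftrightarrow> pos_def (- M)"

definition blk2 :: "real^'c^'a \<Rightarrow> real^'d^'a \<Rightarrow> real^'c^'b \<Rightarrow> real^'d^'b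
    \<Rightarrow> real^('c + 'd)^('a + 'b)" where
  "blk2 P Q R S = (\<chi> i j. case i of
       Inl a \<Rightarrow> (case j of Inl b \<Rightarrow> P$a$b | Inr b \<Rightarrow> Q$a$b)
     | Inr a \<Rightarrow> (case j of Inl b \<Rightarrow> R$a$b | Inr b \<Rightarrow> S$a$b))"

definition hurwitz :: "real^'n^'n \<Rightarrow> bool" where
  "hurwitz M \<longleftrightarrow> (\<forall>(lam::complex) (v::complex^'n). v \<noteq> 0 \<and>
      (\<chi> i. \<Sum>j\<in>UNIV. complex_of_real (M$i$j) * v$j) = lam *s v \<longrightarrow> Re lam < 0)"

definition stabilizable :: "real^'n^'n \<Rightarrow> real^'m^'n \<Rightarrow> bool" where
  "stabilizable A B \<longleftrightarrow> (\<exists>K :: real^'n^'m. hurwitz (A + B ** K))"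

definition detectable :: "real^'n^'p \<Rightarrow> real^'n^'n \<Rightarrow> bool" where
  "detectable C A \<longleftrightarrow> (\<exists>L :: real^'p^'n. hurwitz (A + L ** C))"

definition Mgam ::
  "real^'x^'x \<Rightarrow> real^'w^'x \<Rightarrow> real^'u^'x \<Rightarrow> real^'x^'z \<Rightarrow> real^'x^'y
   \<Rightarrow> real^'w^'z \<Rightarrow> real^'u^'z \<Rightarrow> real^'w^'y \<Rightarrow> real
   \<Rightarrow> real^'x^'x \<Rightarrow> real^'x^'x \<Rightarrow> real^'x^'x \<Rightarrow> real^'y^'x \<Rightarrow> real^'x^'u \<Rightarrow> real^'y^'u
   \<Rightarrow> real^(('x + 'x) + ('w + 'z))^(('x + 'x) + ('w + 'z))" where
  "Mgam A B1 B2 C1 C2 D11 D12 D21 \<gamma> X Y Ah Bh Ch Dh =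
    (let M11 = A ** X + X ** transpose A + B2 ** Ch + transpose (B2 ** Ch);
         M12 = transpose Ah + A + B2 ** Dh ** C2;
         M13 = B1 + B2 ** Dh ** D21;
         M14 = transpose (C1 ** X + D12 ** Ch);
         M22 = transpose A ** Y + Y ** A + Bh ** C2 + transpose (Bh ** C2);
         M23 = Y ** B1 + Bh ** D21;
         M24 = transpose (C1 + D12 ** Dh ** C2);
         M33 = mat (- \<gamma>);
         M34 = transpose (D11 + D12 ** Dh ** D21);
         M44 = mat (- \<gamma>)
     in blk2 (blk2 M11 M12 (transpose M12) M22)
             (blk2 M13 M14 M23 M24)
             (blk2 (transpose M13) (transpose M23) (transpose M14) (transpose M24))
             (blk2 M33 M34 (transpose M34) M44))"

definition Fset ::
  "real^'x^'x \<Rightarrow> real^'w^'x \<Rightarrow> real^'u^'x \<Rightarrow> real^'x^'z \<Rightarrow> real^'x^'y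
   \<Rightarrow> real^'w^'z \<Rightarrow> real^'u^'z \<Rightarrow> real^'w^'y \<Rightarrow> real
   \<Rightarrow> ((real^'x^'x) \<times> (real^'x^'x) \<times> (real^'x^'x) \<times> (real^'y^'x) \<times> (real^'x^'u) \<times> (real^'y^'u)) set" where
  "Fset A B1 B2 C1 C2 D11 D12 D21 \<gamma> =
    {(X, Y, Ah, Bh, Ch, Dh). symmetric_mat X \<and> symmetric_mat Y \<and>
        pos_def (blk2 X (mat 1) (mat 1) Y) \<and>
        neg_def (Mgam A B1 B2 C1 C2 D11 D12 D21 \<gamma> X Y Ah Bh Ch Dh)}"

definition Gset ::
  "real^'x^'x \<Rightarrow> real^'w^'x \<Rightarrow> real^'u^'x \<Rightarrow> real^'x^'z \<Rightarrow> real^'x^'y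
   \<Rightarrow> real^'w^'z \<Rightarrow> real^'u^'z \<Rightarrow> real^'w^'y \<Rightarrow> real
   \<Rightarrow> ((real^'x^'x) \<times> (real^'x^'x) \<times> (real^'x^'x) \<times> (real^'y^'x) \<times> (real^'x^'u)
        \<times> (real^'y^'u) \<times> (real^'x^'x) \<times> (real^'x^'x)) set" where
  "Gset A B1 B2 C1 C2 D11 D12 D21 \<gamma> =
    {(X, Y, Ah, Bh, Ch, Dh, Pi, Xi).
        (X, Y, Ah, Bh, Ch, Dh) \<in> Fset A B1 B2 C1 C2 D11 D12 D21 \<gamma> \<and>
        Xi ** Pi = mat 1 - Y ** X}"

end

theory Submission
  imports Defs
begin

(* Xi Pi = I - YX determines Xi as soon as Pi is invertible, and Pi always is: positive definiteness
   of [X I; I Y] makes I - YX nonsingular. So the part of G_gamma lying over a set of invertible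
   matrices Pi is the continuous image of F_gamma times that set under
   (X, Y, Ah, Bh, Ch, Dh, Pi) |-> (X, Y, Ah, Bh, Ch, Dh, Pi, (I - YX) Pi^-1).
   F_gamma is convex: M_gamma and [X I; I Y] depend affinely on (X, Y, Ah, Bh, Ch, Dh), and
   definiteness is a convex condition. Hence the path components of G_gamma are those of GL_n(R),
   the two sign classes of det: writing an invertible matrix as a product of elementary ones joins
   it inside GL_n(R) to I or to a coordinate reflection, and det cannot change sign along a path
   in GL_n(R). *)

lemma continuous_on_matrix_mult [continuous_intros]:
  fixes F :: "'a::topological_space \<Rightarrow> real^'m^'n" and G :: "'a \<Rightarrow> real^'p^'m"
  assumes "continuous_on S F" and "continuous_on S G"
  shows "continuous_on S (\<lambda>x. F x ** G x)"
  unfolding matrix_matrix_mult_def by (intro continuous_intros assms)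

lemma continuous_on_det [continuous_intros]:
  fixes F :: "'a::topological_space \<Rightarrow> real^'n^'n"
  assumes "continuous_on S F"
  shows "continuous_on S (\<lambda>x. det (F x))"
  unfolding det_def by (intro continuous_intros assms)

lemma matrix_inv:
  assumes "invertible A"
  shows matrix_inv_right: "A ** matrix_inv A = mat 1"
    and matrix_inv_left: "matrix_inv A ** A = mat 1"
  using someI_ex [OF assms [unfolded invertible_def]] by (simp_all add: matrix_inv_def)

lemma column_matrix_mult: "column j (A ** B) = A *v column j B"
  by (simp add: column_def matrix_matrix_mult_def matrix_vector_mult_def vec_eq_iff)

lemma matrix_inv_eq_cramer:
  fixes A :: "real^'n^'n"
  assumes "det A \<noteq> 0"
  shows "matrix_inv A = (\<chi> k j. det (\<chi> i l. if l = k then mat 1 $ i $ j else A $ i $ l) / det A)"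
proof -
  have "A *v column j (matrix_inv A) = column j (mat 1)" for j
    using assms by (simp flip: column_matrix_mult add: matrix_inv_right invertible_det_nz)
  then have "column j (matrix_inv A)
      = (\<chi> k. det (\<chi> i l. if l = k then column j (mat 1) $ i else A $ i $ l) / det A)" for j
    using cramer [OF assms] by blast
  then have "matrix_inv A $ k $ j = det (\<chi> i l. if l = k then mat 1 $ i $ j else A $ i $ l) / det A"
    for k j
    unfolding column_def vec_eq_iff vec_lambda_beta by blast
  then show ?thesis
    by (simp add: vec_eq_iff)
qed

lemma continuous_on_matrix_inv [continuous_intros]:
  fixes F :: "'a::topological_space \<Rightarrow> real^'n^'n"
  assumes "continuous_on S F" and "\<And>x. x \<in> S \<Longrightarrow> det (F x) \<noteq> 0"
  shows "continuous_on S (\<lambda>x. matrix_inv (F x))"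
proof (rule continuous_on_eq)
  have "continuous_on S (\<lambda>x. if l = k then c else F x $ i $ l)" for k l i and c :: real
    by (cases "l = k") (simp_all add: continuous_intros assms)
  then show "continuous_on S
      (\<lambda>x. \<chi> k j. det (\<chi> i l. if l = k then mat 1 $ i $ j else F x $ i $ l) / det (F x))"
    using assms by (intro continuous_intros) auto
qed (simp add: assms matrix_inv_eq_cramer)

section \<open>Path components separated by the sign of a function\<close>

lemma connected_nonvanishing_pos:
  fixes f :: "'a::topological_space \<Rightarrow> real"
  assumes "connected C" and "continuous_on C f" and "0 \<notin> f ` C"
    and "x \<in> C" and "y \<in> C" and "f x > 0"
  shows "f y > 0"
proof (rule ccontr)
  assume "\<not> f y > 0"
  moreover have "connected (f ` C)"
    using assms(2,1) by (rule connected_continuous_image)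
  ultimately have "0 \<in> f ` C"
    using assms(4-6) unfolding connected_iff_interval by (meson imageI less_imp_le not_less)
  with assms(3) show False by contradiction
qed

lemma path_component_pos_part:
  fixes f :: "'a::topological_space \<Rightarrow> real"
  assumes "continuous_on S f" and "0 \<notin> f ` S" and "path_component S x y" and "f x > 0"
  shows "path_component {z \<in> S. f z > 0} x y"
proof -
  let ?C = "path_component_set S x"
  have C: "?C \<subseteq> S" "path_connected ?C" "x \<in> ?C" "y \<in> ?C"
    using assms(3) by (auto simp: path_component_subset path_component_refl path_component_mem)
  have "?C \<subseteq> {z \<in> S. f z > 0}"
  proof
    fix z assume "z \<in> ?C"
    moreover have "continuous_on ?C f" "0 \<notin> f ` ?C"
      using C(1) assms(1,2) by (auto intro: continuous_on_subset)
    ultimately show "z \<in> {z \<in> S. f z > 0}"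
      using connected_nonvanishing_pos [of ?C f x z] C assms(4) path_connected_imp_connected
      by blast
  qed
  with C show ?thesis
    by (meson path_component_of_subset path_connected_component)
qed

lemma path_component_set_pos:
  fixes f :: "'a::topological_space \<Rightarrow> real"
  assumes "continuous_on S f" and "0 \<notin> f ` S" and "path_connected {z \<in> S. f z > 0}"
    and "x \<in> S" and "f x > 0"
  shows "path_component_set S x = {z \<in> S. f z > 0}"
proof
  show "path_component_set S x \<subseteq> {z \<in> S. f z > 0}"
    using path_component_pos_part [OF assms(1,2) _ assms(5)] path_component_mem(2) by blast
  show "{z \<in> S. f z > 0} \<subseteq> path_component_set S x"
    using assms(3-5) by (intro path_component_maximal) auto
qed

lemma path_components_of_sign_split:
  fixes f :: "'a::topological_space \<Rightarrow> real"
  assumes "continuous_on S f" and "0 \<notin> f ` S"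
    and "path_connected {x \<in> S. f x > 0}" and "path_connected {x \<in> S. f x < 0}"
    and "\<exists>x \<in> S. f x > 0" and "\<exists>x \<in> S. f x < 0"
  shows "path_components_of (top_of_set S) = {{x \<in> S. f x > 0}, {x \<in> S. f x < 0}}"
proof -
  have pos: "path_component_set S x = {x \<in> S. f x > 0}" if "x \<in> S" "f x > 0" for x
    using path_component_set_pos assms(1-3) that by blast
  have neg: "path_component_set S x = {x \<in> S. f x < 0}" if "x \<in> S" "f x < 0" for x
  proof -
    have "continuous_on S (\<lambda>z. - f z)" "0 \<notin> (\<lambda>z. - f z) ` S"
      using assms(1,2) by (auto intro: continuous_intros)
    then show ?thesis
      using path_component_set_pos [of S "\<lambda>z. - f z" x] assms(4) that by simp
  qed
  have "path_component_of (top_of_set S) = path_component S"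
    by (intro ext) simp
  then have "path_components_of (top_of_set S) = path_component_set S ` S"
    by (simp add: path_components_of_def)
  also have "\<dots> = {{x \<in> S. f x > 0}, {x \<in> S. f x < 0}}"
  proof (intro equalityI subsetI)
    fix C assume "C \<in> path_component_set S ` S"
    then obtain x where x: "x \<in> S" "C = path_component_set S x"
      by blast
    moreover have "f x \<noteq> 0"
      using x(1) assms(2) by force
    ultimately show "C \<in> {{x \<in> S. f x > 0}, {x \<in> S. f x < 0}}"
      using pos neg by (metis insertCI linorder_neqE_linordered_idom)
  next
    fix C assume "C \<in> {{x \<in> S. f x > 0}, {x \<in> S. f x < 0}}"
    then show "C \<in> path_component_set S ` S"
      using assms(5,6) pos neg by (metis (no_types, lifting) empty_iff image_eqI insert_iff)
  qed
  finally show ?thesis .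
qed

section \<open>The two path components of the general linear group\<close>

abbreviation GL :: "(real^'n^'n) set" where
  "GL \<equiv> {A. det A \<noteq> 0}"

lemma det_nonzero_iff_kernel_trivial:
  fixes A :: "real^'n^'n"
  shows "det A \<noteq> 0 \<longleftrightarrow> (\<forall>x. A *v x = 0 \<longrightarrow> x = 0)"
  by (simp add: invertible_det_nz [symmetric] invertible_left_inverse matrix_left_invertible_ker)

lemma path_component_segment:
  fixes a b :: "'a::real_normed_vector"
  assumes "\<And>u. 0 \<le> u \<Longrightarrow> u \<le> 1 \<Longrightarrow> (1 - u) *\<^sub>R a + u *\<^sub>R b \<in> S"
  shows "path_component S a b"
  using assms by (intro path_component_linepath) (auto simp: in_segment)

lemma path_component_GL_mult:
  fixes A A' B B' :: "real^'n^'n"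
  assumes "path_component GL A A'" and "path_component GL B B'"
  shows "path_component GL (A ** B) (A' ** B')"
proof -
  obtain g where g: "path g" "path_image g \<subseteq> GL" "pathstart g = A" "pathfinish g = A'"
    using assms(1) by (auto simp: path_component_def)
  obtain h where h: "path h" "path_image h \<subseteq> GL" "pathstart h = B" "pathfinish h = B'"
    using assms(2) by (auto simp: path_component_def)
  have "path (\<lambda>t. g t ** h t)"
    using g(1) h(1) unfolding path_def by (intro continuous_intros)
  moreover have "path_image (\<lambda>t. g t ** h t) \<subseteq> GL"
    using g(2) h(2) by (auto simp: path_image_def det_mul image_subset_iff)
  ultimately show ?thesis
    using g(3,4) h(3,4) unfolding path_component_def pathstart_def pathfinish_def by blast
qed

definition diag_mat :: "('n \<Rightarrow> real) \<Rightarrow> real^'n^'n" where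
  "diag_mat d = (\<chi> i j. if i = j then d i else 0)"

lemma diag_mat_mult: "diag_mat d ** diag_mat e = diag_mat (\<lambda>i. d i * e i)"
proof -
  have "(diag_mat d ** diag_mat e) $ i $ j
      = (\<Sum>k\<in>UNIV. if k = i then (if i = j then d i * e i else 0) else 0)" for i j
    unfolding matrix_matrix_mult_def diag_mat_def vec_lambda_beta by (intro sum.cong) auto
  then show ?thesis
    by (simp add: vec_eq_iff diag_mat_def)
qed

lemma det_diag_mat: "det (diag_mat d) = (\<Prod>i\<in>UNIV. d i)"
  by (simp add: det_diagonal diag_mat_def)

lemma diag_mat_one: "diag_mat (\<lambda>_. 1) = mat 1"
  by (simp add: diag_mat_def mat_def)

definition coord_reflection :: "'n \<Rightarrow> real^'n^'n" where
  "coord_reflection a = diag_mat (\<lambda>i. if i = a then -1 else 1)"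

lemma det_coord_reflection: "det (coord_reflection a) = -1"
  by (simp add: coord_reflection_def det_diag_mat prod.If_cases)

lemma coord_reflection_square: "coord_reflection a ** coord_reflection a = mat 1"
  unfolding coord_reflection_def diag_mat_mult diag_mat_one [symmetric]
  by (rule arg_cong [where f = diag_mat]) auto

lemma coord_reflection_mult_vec:
  "(coord_reflection a *v x) $ i = (if i = a then - x $ i else x $ i)"
proof -
  have "(coord_reflection a *v x) $ i
      = (\<Sum>j\<in>UNIV. if j = i then (if i = a then - x $ i else x $ i) else 0)"
    unfolding coord_reflection_def diag_mat_def matrix_vector_mult_def vec_lambda_beta
    by (intro sum.cong) auto
  then show ?thesis
    by simp
qed

lemma swap_mult_vec:
  "((\<chi> i j. mat 1 $ i $ Transposition.transpose m n j) *v x) $ i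
    = x $ Transposition.transpose m n i"
proof -
  have "((\<chi> i j. mat 1 $ i $ Transposition.transpose m n j) *v x) $ i
      = (\<Sum>j\<in>UNIV. if j = Transposition.transpose m n i then x $ j else 0)"
    unfolding matrix_vector_mult_def mat_def vec_lambda_beta
    by (intro sum.cong) (auto simp: Transposition.transpose_def)
  then show ?thesis
    by simp
qed

lemma path_component_swap_coord_reflection:
  fixes m n :: "'n::finite"
  assumes "m \<noteq> n"
  shows "path_component GL (\<chi> i j. mat 1 $ i $ Transposition.transpose m n j) (coord_reflection m)"
proof (rule path_component_segment)
  fix u :: real
  let ?P = "(\<chi> i j. mat 1 $ i $ Transposition.transpose m n j) :: real^'n^'n"
  let ?M = "(1 - u) *\<^sub>R ?P + u *\<^sub>R coord_reflection m"
  have "x = 0" if "?M *v x = 0" for x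
  proof -
    have Mx: "(1 - u) * x $ Transposition.transpose m n i
        + u * (if i = m then - x $ i else x $ i) = 0" for i
      using arg_cong [OF that, of "\<lambda>y. y $ i"]
      by (simp add: matrix_vector_mult_add_rdistrib scaleR_matrix_vector_assoc [symmetric]
          swap_mult_vec coord_reflection_mult_vec)
    have eq_m: "(1 - u) * x $ n - u * x $ m = 0" and eq_n: "(1 - u) * x $ m + u * x $ n = 0"
      using Mx [of m] Mx [of n] assms by simp_all
    have nz: "(1 - u)\<^sup>2 + u\<^sup>2 \<noteq> 0"
      by (auto simp: sum_power2_eq_zero_iff)
    have "x $ m * ((1 - u)\<^sup>2 + u\<^sup>2)
        = (1 - u) * ((1 - u) * x $ m + u * x $ n) - u * ((1 - u) * x $ n - u * x $ m)"
      and "x $ n * ((1 - u)\<^sup>2 + u\<^sup>2)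
        = (1 - u) * ((1 - u) * x $ n - u * x $ m) + u * ((1 - u) * x $ m + u * x $ n)"
      by (simp_all add: algebra_simps power2_eq_square)
    then have "x $ m * ((1 - u)\<^sup>2 + u\<^sup>2) = 0" and "x $ n * ((1 - u)\<^sup>2 + u\<^sup>2) = 0"
      unfolding eq_m eq_n by simp_all
    then have "x $ m = 0" and "x $ n = 0"
      by (simp_all only: mult_eq_0_iff nz simp_thms)
    moreover have "x $ i = 0" if "i \<noteq> m" "i \<noteq> n" for i
      using Mx [of i] that by (simp add: Transposition.transpose_def algebra_simps)
    ultimately show "x = 0"
      by (metis vec_eq_iff zero_index)
  qed
  then show "?M \<in> GL"
    by (simp add: det_nonzero_iff_kernel_trivial)
qed

lemma path_component_coord_reflections:
  fixes a b :: "'n::finite"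
  shows "path_component GL (coord_reflection a) (coord_reflection b)"
proof (cases "a = b")
  case True
  then show ?thesis
    by (simp add: path_component_refl det_coord_reflection)
next
  case False
  have "Transposition.transpose a b = Transposition.transpose b a"
    by (rule transpose_commute)
  then have "path_component GL (\<chi> i j. mat 1 $ i $ Transposition.transpose a b j)
      (coord_reflection b)"
    using path_component_swap_coord_reflection [of b a] False by simp
  then show ?thesis
    using path_component_swap_coord_reflection [OF False]
    by (blast intro: path_component_sym path_component_trans)
qed

lemma coord_reflection_group:
  assumes "B \<in> {mat 1, coord_reflection a}" and "C \<in> {mat 1, coord_reflection a}"
  shows "B ** C \<in> {mat 1, coord_reflection a}"
  using assms by (auto simp: coord_reflection_square)

lemma path_component_sign_diag:
  fixes K :: "'n::finite set"
  shows "\<exists>B \<in> {mat 1, coord_reflection a}.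
    path_component GL (diag_mat (\<lambda>i. if i \<in> K then -1 else 1)) B"
proof -
  have "finite K" by simp
  then show ?thesis
  proof (induction K rule: finite_induct)
    case empty
    then show ?case
      by (auto simp: diag_mat_one path_component_refl)
  next
    case (insert i K)
    from insert.IH obtain B where B: "B \<in> {mat 1, coord_reflection a}"
      and K: "path_component GL (diag_mat (\<lambda>j. if j \<in> K then -1 else 1)) B"
      by blast
    have "diag_mat (\<lambda>j. if j \<in> insert i K then -1 else 1)
        = diag_mat (\<lambda>j. if j \<in> K then -1 else 1) ** coord_reflection i"
      unfolding coord_reflection_def diag_mat_mult
      by (rule arg_cong [where f = diag_mat]) (use insert.hyps in auto)
    moreover have "B ** coord_reflection a \<in> {mat 1, coord_reflection a}"
      by (rule coord_reflection_group [OF B]) simp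
    ultimately show ?case
      using path_component_GL_mult [OF K path_component_coord_reflections] by metis
  qed
qed

lemma convex_combination_pos:
  fixes a b u :: real
  assumes "0 < a" and "0 < b" and "0 \<le> u" and "u \<le> 1"
  shows "0 < (1 - u) * a + u * b"
proof (cases "u = 1")
  case True
  then show ?thesis using assms by simp
next
  case False
  then show ?thesis using assms by (intro add_pos_nonneg) auto
qed

lemma path_component_diagonal_sign_diag:
  fixes D :: "real^'n^'n"
  assumes diagonal: "\<And>i j. i \<noteq> j \<Longrightarrow> D $ i $ j = 0" and "det D \<noteq> 0"
  shows "path_component GL D (diag_mat (\<lambda>i. if D $ i $ i < 0 then -1 else 1))"
proof (rule path_component_segment)
  fix u :: real assume u: "0 \<le> u" "u \<le> 1"
  have D: "D = diag_mat (\<lambda>i. D $ i $ i)"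
    using diagonal by (auto simp: diag_mat_def vec_eq_iff)
  have "D $ i $ i \<noteq> 0" for i
    using assms(2) by (simp add: det_diagonal [OF diagonal])
  then have "(1 - u) * D $ i $ i + u * (if D $ i $ i < 0 then -1 else 1) \<noteq> 0" for i
  proof (cases "D $ i $ i < 0")
    case True
    then show ?thesis
      using convex_combination_pos [of "- D $ i $ i" 1 u] u by (simp add: algebra_simps)
  next
    case False
    then show ?thesis
      using convex_combination_pos [of "D $ i $ i" 1 u] u \<open>D $ i $ i \<noteq> 0\<close> by simp
  qed
  moreover have "(1 - u) *\<^sub>R D + u *\<^sub>R diag_mat (\<lambda>i. if D $ i $ i < 0 then -1 else 1)
      = diag_mat (\<lambda>i. (1 - u) * D $ i $ i + u * (if D $ i $ i < 0 then -1 else 1))"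
    by (subst D) (auto simp: diag_mat_def vec_eq_iff)
  ultimately show "(1 - u) *\<^sub>R D + u *\<^sub>R diag_mat (\<lambda>i. if D $ i $ i < 0 then -1 else 1) \<in> GL"
    by (simp add: det_diag_mat)
qed

lemma det_transvection:
  fixes m n :: "'n::finite"
  assumes "m \<noteq> n"
  shows "det (\<chi> i j. if i = m \<and> j = n then c else of_bool (i = j) :: real^'n^'n) = 1"
proof -
  have "(\<chi> i j. if i = m \<and> j = n then c else of_bool (i = j) :: real^'n^'n)
      = (\<chi> k. if k = m then row m (mat 1) + c *s row n (mat 1) else row k (mat 1))"
    using assms by (auto simp: vec_eq_iff row_def mat_def)
  then show ?thesis
    using det_row_operation [OF assms, of "mat 1" c] by simp
qed

lemma path_component_transvection:
  fixes m n :: "'n::finite"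
  assumes "m \<noteq> n"
  shows "path_component GL (\<chi> i j. if i = m \<and> j = n then c else of_bool (i = j)) (mat 1)"
proof (rule path_component_segment)
  fix u :: real
  have "(1 - u) *\<^sub>R (\<chi> i j. if i = m \<and> j = n then c else of_bool (i = j)) + u *\<^sub>R mat 1
      = (\<chi> i j. if i = m \<and> j = n then (1 - u) * c else of_bool (i = j) :: real^'n^'n)"
    using assms by (auto simp: vec_eq_iff mat_def algebra_simps)
  then show "(1 - u) *\<^sub>R (\<chi> i j. if i = m \<and> j = n then c else of_bool (i = j)) + u *\<^sub>R mat 1 \<in> GL"
    by (simp add: det_transvection [OF assms])
qed

lemma GL_path_component_cases:
  fixes A :: "real^'n^'n" and a :: 'n
  assumes "det A \<noteq> 0"
  shows "\<exists>B \<in> {mat 1, coord_reflection a}. path_component GL A B"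
proof -
  have "det A \<noteq> 0 \<longrightarrow> (\<exists>B \<in> {mat 1, coord_reflection a}. path_component GL A B)"
  proof (induction A rule: induct_matrix_elementary)
    case (1 A B)
    show ?case
    proof
      assume "det (A ** B) \<noteq> 0"
      with 1 obtain A' B' where "A' \<in> {mat 1, coord_reflection a}" "path_component GL A A'"
        and "B' \<in> {mat 1, coord_reflection a}" "path_component GL B B'"
        by (auto simp: det_mul)
      then show "\<exists>C \<in> {mat 1, coord_reflection a}. path_component GL (A ** B) C"
        using coord_reflection_group path_component_GL_mult by blast
    qed
  next
    case (2 A i)
    then show ?case
      by (simp add: det_zero_row)
  next
    case (3 A)
    show ?case
    proof
      assume "det A \<noteq> 0"
      with 3 have "path_component GL A (diag_mat (\<lambda>i. if A $ i $ i < 0 then -1 else 1))"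
        by (rule path_component_diagonal_sign_diag)
      moreover have "\<exists>B \<in> {mat 1, coord_reflection a}.
          path_component GL (diag_mat (\<lambda>i. if A $ i $ i < 0 then -1 else 1)) B"
        using path_component_sign_diag [where K = "{i. A $ i $ i < 0}"] by simp
      ultimately show "\<exists>B \<in> {mat 1, coord_reflection a}. path_component GL A B"
        by (blast intro: path_component_trans)
    qed
  next
    case (4 m n)
    have "path_component GL (\<chi> i j. mat 1 $ i $ Transposition.transpose m n j) (coord_reflection m)"
      using 4 by (rule path_component_swap_coord_reflection)
    with path_component_coord_reflections show ?case
      by (blast intro: path_component_trans)
  next
    case (5 m n c)
    then show ?case
      using path_component_transvection by blast
  qed
  with assms show ?thesis
    by blast
qed

lemma path_component_det_pos_mat_1:
  fixes A :: "real^'n^'n"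
  assumes "det A > 0"
  shows "path_component {M. det M > 0} A (mat 1)"
proof -
  have det: "continuous_on GL det" "0 \<notin> det ` GL"
    by (auto intro: continuous_on_det [OF continuous_on_id, unfolded id_def])
  fix a :: 'n
  obtain B where B: "B \<in> {mat 1, coord_reflection a}" and AB: "path_component GL A B"
    using GL_path_component_cases [of A a] assms by auto
  have pos: "{M \<in> GL. det M > 0} = {M. det M > 0}"
    by auto
  have "path_component {M. det M > 0} A B"
    using path_component_pos_part [OF det AB assms] unfolding pos .
  moreover from this have "B = mat 1"
    using B path_component_mem(2) by (fastforce simp: det_coord_reflection)
  ultimately show ?thesis
    by simp
qed

lemma path_component_det_neg_coord_reflection:
  fixes A :: "real^'n^'n"
  assumes "det A < 0"
  shows "path_component {M. det M < 0} A (coord_reflection a)"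
proof -
  have det: "continuous_on GL (\<lambda>M. - det M)" "0 \<notin> (\<lambda>M. - det M) ` GL"
    by (auto intro!: continuous_intros)
  obtain B where B: "B \<in> {mat 1, coord_reflection a}" and AB: "path_component GL A B"
    using GL_path_component_cases [of A a] assms by auto
  have neg: "{M \<in> GL. - det M > 0} = {M. det M < 0}"
    by auto
  have "path_component {M. det M < 0} A B"
    using path_component_pos_part [OF det AB] assms unfolding neg by simp
  moreover from this have "B = coord_reflection a"
    using B path_component_mem(2) by fastforce
  ultimately show ?thesis
    by simp
qed

lemma path_connected_det_pos: "path_connected {A :: real^'n^'n. det A > 0}"
  unfolding path_connected_component
  using path_component_det_pos_mat_1 by (blast intro: path_component_sym path_component_trans)

lemma path_connected_det_neg: "path_connected {A :: real^'n^'n. det A < 0}"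
  unfolding path_connected_component
  using path_component_det_neg_coord_reflection
  by (blast intro: path_component_sym path_component_trans)

section \<open>Convexity of the feasible set\<close>

lemma transpose_add: "transpose (A + B) = transpose A + transpose B"
  by (simp add: transpose_def vec_eq_iff)

lemma matrix_add_rdistrib: "(A + B) ** C = A ** C + B ** C"
  by (simp add: matrix_matrix_mult_def vec_eq_iff distrib_right sum.distrib)

definition affine_map :: "('a::real_vector \<Rightarrow> 'b::real_vector) \<Rightarrow> bool" where
  "affine_map f \<longleftrightarrow> (\<forall>u v x y. u + v = 1 \<longrightarrow> f (u *\<^sub>R x + v *\<^sub>R y) = u *\<^sub>R f x + v *\<^sub>R f y)"

lemma affine_map_const: "affine_map (\<lambda>x. c)"
  unfolding affine_map_def by (metis scaleR_add_left scaleR_one)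

lemma affine_map_id: "affine_map (\<lambda>x. x)"
  unfolding affine_map_def by simp

lemma affine_map_add: "affine_map f \<Longrightarrow> affine_map g \<Longrightarrow> affine_map (\<lambda>x. f x + g x)"
  unfolding affine_map_def by (simp add: algebra_simps)

lemma affine_map_fst: "affine_map f \<Longrightarrow> affine_map (\<lambda>x. fst (f x))"
  unfolding affine_map_def by simp

lemma affine_map_snd: "affine_map f \<Longrightarrow> affine_map (\<lambda>x. snd (f x))"
  unfolding affine_map_def by simp

lemma affine_map_matrix_mult_left: "affine_map f \<Longrightarrow> affine_map (\<lambda>x. (C :: real^'m^'n) ** f x)"
  unfolding affine_map_def by (simp add: matrix_add_ldistrib matrix_scalar_ac scalar_matrix_assoc)

lemma affine_map_matrix_mult_right: "affine_map f \<Longrightarrow> affine_map (\<lambda>x. f x ** (C :: real^'m^'n))"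
  unfolding affine_map_def by (simp add: matrix_add_rdistrib scalar_matrix_assoc [symmetric])

lemma affine_map_transpose: "affine_map f \<Longrightarrow> affine_map (\<lambda>x. transpose (f x :: real^'m^'n))"
  unfolding affine_map_def by (simp add: transpose_add transpose_scalar)

lemma affine_map_blk2:
  "affine_map f \<Longrightarrow> affine_map g \<Longrightarrow> affine_map h \<Longrightarrow> affine_map k \<Longrightarrow>
    affine_map (\<lambda>x. blk2 (f x) (g x) (h x) (k x))"
  unfolding affine_map_def by (simp add: blk2_def vec_eq_iff split: sum.split)

lemmas affine_map_intros = affine_map_const affine_map_id affine_map_add affine_map_fst
  affine_map_snd affine_map_matrix_mult_left affine_map_matrix_mult_right affine_map_transpose
  affine_map_blk2

lemma convex_affine_map_vimage: "affine_map f \<Longrightarrow> convex C \<Longrightarrow> convex (f -` C)"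
  unfolding convex_def affine_map_def by simp

lemma convex_symmetric_mat: "convex {M :: real^'n^'n. symmetric_mat M}"
  unfolding convex_def symmetric_mat_def by (simp add: transpose_add transpose_scalar)

lemma convex_pos_def: "convex {M :: real^'n^'n. pos_def M}"
proof (rule convexI)
  fix P Q :: "real^'n^'n" and u v :: real
  assume "P \<in> {M. pos_def M}" "Q \<in> {M. pos_def M}" and uv: "0 \<le> u" "0 \<le> v" "u + v = 1"
  then have P: "symmetric_mat P" "\<And>x. x \<noteq> 0 \<Longrightarrow> x \<bullet> (P *v x) > 0"
    and Q: "symmetric_mat Q" "\<And>x. x \<noteq> 0 \<Longrightarrow> x \<bullet> (Q *v x) > 0"
    by (auto simp: pos_def_def)
  have "symmetric_mat (u *\<^sub>R P + v *\<^sub>R Q)"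
    using P(1) Q(1) convex_symmetric_mat uv unfolding convex_def by blast
  moreover have "x \<bullet> ((u *\<^sub>R P + v *\<^sub>R Q) *v x) > 0" if "x \<noteq> 0" for x
  proof -
    have "x \<bullet> ((u *\<^sub>R P + v *\<^sub>R Q) *v x) = u * (x \<bullet> (P *v x)) + v * (x \<bullet> (Q *v x))"
      by (simp add: matrix_vector_mult_add_rdistrib scaleR_matrix_vector_assoc [symmetric]
          inner_add_right)
    also have "\<dots> > 0"
      using P(2) [OF that] Q(2) [OF that] uv
      by (cases "u = 0") (auto intro: add_pos_nonneg)
    finally show ?thesis .
  qed
  ultimately show "u *\<^sub>R P + v *\<^sub>R Q \<in> {M. pos_def M}"
    by (simp add: pos_def_def)
qed

lemma convex_neg_def: "convex {M :: real^'n^'n. neg_def M}"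
proof -
  have "{M :: real^'n^'n. neg_def M} = (\<lambda>M. - M) ` {M. pos_def M}"
    by (force simp: neg_def_def)
  then show ?thesis
    using convex_negations [OF convex_pos_def] by simp
qed

lemma affine_map_Mgam:
  "affine_map (\<lambda>(X, Y, Ah, Bh, Ch, Dh). Mgam A B1 B2 C1 C2 D11 D12 D21 \<gamma> X Y Ah Bh Ch Dh)"
  unfolding Mgam_def Let_def case_prod_unfold by (intro affine_map_intros)

lemma convex_Fset: "convex (Fset A B1 B2 C1 C2 D11 D12 D21 \<gamma>)"
proof -
  have Fset_eq: "Fset A B1 B2 C1 C2 D11 D12 D21 \<gamma>
      = (\<lambda>(X, Y, _). X) -` {M. symmetric_mat M} \<inter> (\<lambda>(X, Y, _). Y) -` {M. symmetric_mat M}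
        \<inter> (\<lambda>(X, Y, _). blk2 X (mat 1) (mat 1) Y) -` {M. pos_def M}
        \<inter> (\<lambda>(X, Y, Ah, Bh, Ch, Dh). Mgam A B1 B2 C1 C2 D11 D12 D21 \<gamma> X Y Ah Bh Ch Dh)
            -` {M. neg_def M}"
    by (auto simp: Fset_def)
  have affine: "affine_map (\<lambda>(X, Y, _). X :: real^'x^'x)" "affine_map (\<lambda>(X, Y, _). Y :: real^'x^'x)"
    "affine_map (\<lambda>(X :: real^'x^'x, Y, _). blk2 X (mat 1) (mat 1) Y)"
    unfolding case_prod_unfold by (intro affine_map_intros)+
  show ?thesis
    unfolding Fset_eq
    by (intro convex_Int convex_affine_map_vimage affine affine_map_Mgam convex_symmetric_mat
        convex_pos_def convex_neg_def)
qed

section \<open>Parametrizing Gset by Fset and the invertible matrices\<close>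

lemma sum_UNIV_Plus:
  fixes f :: "'a::finite + 'b::finite \<Rightarrow> 'c::comm_monoid_add"
  shows "(\<Sum>x\<in>UNIV. f x) = (\<Sum>a\<in>UNIV. f (Inl a)) + (\<Sum>b\<in>UNIV. f (Inr b))"
  using sum.Plus [of "UNIV :: 'a set" "UNIV :: 'b set" f] by (simp add: comp_def)

lemma blk2_mult_vec_Inl:
  "(blk2 P Q R S *v v) $ Inl a = (P *v (\<chi> b. v $ Inl b) + Q *v (\<chi> b. v $ Inr b)) $ a"
  by (simp add: blk2_def matrix_vector_mult_def sum_UNIV_Plus)

lemma blk2_mult_vec_Inr:
  "(blk2 P Q R S *v v) $ Inr a = (R *v (\<chi> b. v $ Inl b) + S *v (\<chi> b. v $ Inr b)) $ a"
  by (simp add: blk2_def matrix_vector_mult_def sum_UNIV_Plus)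

lemma det_one_minus_mult_nonzero:
  fixes X Y :: "real^'n^'n"
  assumes "pos_def (blk2 X (mat 1) (mat 1) Y)"
  shows "det (mat 1 - Y ** X) \<noteq> 0"
proof -
  have "u = 0" if u: "(mat 1 - Y ** X) *v u = 0" for u
  proof -
    define v :: "real^('n + 'n)" where "v = (\<chi> i. case i of Inl a \<Rightarrow> u $ a | Inr a \<Rightarrow> - (X *v u) $ a)"
    have v: "(\<chi> b. v $ Inl b) = u" "(\<chi> b. v $ Inr b) = - (X *v u)"
      by (simp_all add: v_def vec_eq_iff)
    have "Y *v (X *v u) = u"
      using u by (simp add: matrix_vector_mult_diff_rdistrib matrix_vector_mul_assoc)
    then have "(blk2 X (mat 1) (mat 1) Y *v v) $ i = 0" for i
      by (cases i) (simp_all add: blk2_mult_vec_Inl blk2_mult_vec_Inr v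
          linear_neg [OF matrix_vector_mul_linear])
    then have "blk2 X (mat 1) (mat 1) Y *v v = 0"
      by (simp add: vec_eq_iff)
    then have "v = 0"
      using assms unfolding pos_def_def by force
    then show "u = 0"
      using v(1) by (simp add: vec_eq_iff)
  qed
  then show ?thesis
    by (simp add: det_nonzero_iff_kernel_trivial)
qed

lemma Gset_det_nonzero:
  assumes "(X, Y, Ah, Bh, Ch, Dh, P, Q) \<in> Gset A B1 B2 C1 C2 D11 D12 D21 \<gamma>"
  shows "det P \<noteq> 0"
proof -
  from assms have "pos_def (blk2 X (mat 1) (mat 1) Y)" and "Q ** P = mat 1 - Y ** X"
    by (simp_all add: Gset_def Fset_def)
  then have "det Q * det P \<noteq> 0"
    by (metis det_mul det_one_minus_mult_nonzero)
  then show ?thesis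
    by simp
qed

lemma Gset_slice_eq_image:
  assumes "\<And>P. P \<in> \<P> \<Longrightarrow> det P \<noteq> 0"
  shows "{(X, Y, Ah, Bh, Ch, Dh, Pi, Xi) \<in> Gset A B1 B2 C1 C2 D11 D12 D21 \<gamma>. Pi \<in> \<P>}
    = (\<lambda>((X, Y, Ah, Bh, Ch, Dh), P). (X, Y, Ah, Bh, Ch, Dh, P, (mat 1 - Y ** X) ** matrix_inv P))
        ` (Fset A B1 B2 C1 C2 D11 D12 D21 \<gamma> \<times> \<P>)"
    (is "?slice = ?\<Phi> ` (?F \<times> \<P>)")
proof (intro equalityI subsetI)
  fix g assume "g \<in> ?slice"
  then obtain X Y Ah Bh Ch Dh P Q where g: "g = (X, Y, Ah, Bh, Ch, Dh, P, Q)"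
    and F: "(X, Y, Ah, Bh, Ch, Dh) \<in> ?F" and P: "P \<in> \<P>" and "Q ** P = mat 1 - Y ** X"
    by (auto simp: Gset_def)
  moreover have "P ** matrix_inv P = mat 1"
    using assms [OF P] by (simp add: matrix_inv_right invertible_det_nz)
  ultimately have "Q = (mat 1 - Y ** X) ** matrix_inv P"
    by (metis matrix_mul_assoc matrix_mul_rid)
  with g F P show "g \<in> ?\<Phi> ` (?F \<times> \<P>)"
    by (auto intro!: image_eqI [where x = "((X, Y, Ah, Bh, Ch, Dh), P)"])
next
  fix g assume "g \<in> ?\<Phi> ` (?F \<times> \<P>)"
  then obtain X Y Ah Bh Ch Dh P where g: "g = ?\<Phi> ((X, Y, Ah, Bh, Ch, Dh), P)"
    and F: "(X, Y, Ah, Bh, Ch, Dh) \<in> ?F" and P: "P \<in> \<P>"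
    by auto
  have "matrix_inv P ** P = mat 1"
    using assms [OF P] by (simp add: matrix_inv_left invertible_det_nz)
  then have "((mat 1 - Y ** X) ** matrix_inv P) ** P = mat 1 - Y ** X"
    by (simp flip: matrix_mul_assoc)
  with g F P show "g \<in> ?slice"
    by (simp add: Gset_def)
qed

lemma path_connected_Gset_slice:
  assumes "path_connected \<P>" and "\<And>P. P \<in> \<P> \<Longrightarrow> det P \<noteq> 0"
  shows "path_connected {(X, Y, Ah, Bh, Ch, Dh, Pi, Xi) \<in> Gset A B1 B2 C1 C2 D11 D12 D21 \<gamma>. Pi \<in> \<P>}"
proof -
  have "path_connected
      ((\<lambda>((X, Y, Ah, Bh, Ch, Dh), P). (X, Y, Ah, Bh, Ch, Dh, P, (mat 1 - Y ** X) ** matrix_inv P))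
        ` (Fset A B1 B2 C1 C2 D11 D12 D21 \<gamma> \<times> \<P>))"
  proof (rule path_connected_continuous_image)
    show "continuous_on (Fset A B1 B2 C1 C2 D11 D12 D21 \<gamma> \<times> \<P>)
        (\<lambda>((X, Y, Ah, Bh, Ch, Dh), P). (X, Y, Ah, Bh, Ch, Dh, P, (mat 1 - Y ** X) ** matrix_inv P))"
      using assms(2) by (auto simp: case_prod_unfold intro!: continuous_intros)
    show "path_connected (Fset A B1 B2 C1 C2 D11 D12 D21 \<gamma> \<times> \<P>)"
      by (intro path_connected_Times convex_imp_path_connected convex_Fset assms(1))
  qed
  then show ?thesis
    by (simp add: Gset_slice_eq_image [OF assms(2)])
qed

lemma Gset_slice_nonempty:
  assumes "Fset A B1 B2 C1 C2 D11 D12 D21 \<gamma> \<noteq> {}" and "P \<in> \<P>" and "\<And>P. P \<in> \<P> \<Longrightarrow> det P \<noteq> 0"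
  shows "{(X, Y, Ah, Bh, Ch, Dh, Pi, Xi) \<in> Gset A B1 B2 C1 C2 D11 D12 D21 \<gamma>. Pi \<in> \<P>} \<noteq> {}"
  using assms by (auto simp: Gset_slice_eq_image)

theorem proposition2:
  fixes A :: "real^'x^'x" and B1 :: "real^'w^'x" and B2 :: "real^'u^'x"
    and C1 :: "real^'x^'z" and C2 :: "real^'x^'y"
    and D11 :: "real^'w^'z" and D12 :: "real^'u^'z" and D21 :: "real^'w^'y"
    and \<gamma> :: real
  assumes "stabilizable A B2" and "detectable C2 A"
    and "\<gamma> > 0"
    and "Fset A B1 B2 C1 C2 D11 D12 D21 \<gamma> \<noteq> {}"
  shows "path_components_of
           (subtopology euclidean (Gset A B1 B2 C1 C2 D11 D12 D21 \<gamma>)) =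
         { {(X, Y, Ah, Bh, Ch, Dh, Pi, Xi) \<in> Gset A B1 B2 C1 C2 D11 D12 D21 \<gamma>. det Pi > 0},
           {(X, Y, Ah, Bh, Ch, Dh, Pi, Xi) \<in> Gset A B1 B2 C1 C2 D11 D12 D21 \<gamma>. det Pi < 0} }"
proof -
  let ?G = "Gset A B1 B2 C1 C2 D11 D12 D21 \<gamma>"
  let ?det_Pi = "\<lambda>(X, Y, Ah, Bh, Ch, Dh, Pi :: real^'x^'x, Xi). det Pi"
  let ?slice = "\<lambda>\<P>. {(X, Y, Ah, Bh, Ch, Dh, Pi, Xi) \<in> ?G. Pi \<in> \<P>}"
  have pos: "{p \<in> ?G. ?det_Pi p > 0} = ?slice {P. det P > 0}"
    and neg: "{p \<in> ?G. ?det_Pi p < 0} = ?slice {P. det P < 0}"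
    by auto
  fix a :: 'x
  have "?slice {P. det P > 0} \<noteq> {}"
    by (rule Gset_slice_nonempty [OF assms(4), of "mat 1"]) simp_all
  moreover have "?slice {P. det P < 0} \<noteq> {}"
    by (rule Gset_slice_nonempty [OF assms(4), of "coord_reflection a"])
      (simp_all add: det_coord_reflection)
  ultimately have
    "path_components_of (top_of_set ?G) = {?slice {P. det P > 0}, ?slice {P. det P < 0}}"
    unfolding pos [symmetric] neg [symmetric]
  proof (intro path_components_of_sign_split)
    show "continuous_on ?G ?det_Pi"
      by (auto simp: case_prod_unfold intro!: continuous_intros)
    show "0 \<notin> ?det_Pi ` ?G"
      by (auto dest: Gset_det_nonzero)
    show "path_connected {p \<in> ?G. ?det_Pi p > 0}"
      unfolding pos by (rule path_connected_Gset_slice [OF path_connected_det_pos]) simp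
    show "path_connected {p \<in> ?G. ?det_Pi p < 0}"
      unfolding neg by (rule path_connected_Gset_slice [OF path_connected_det_neg]) simp
  qed blast+
  then show ?thesis
    by simp
qed

end
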